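(* Let $H$ be a hexagonal system with a perfect matching, and let $H_1,H_2,\ldots,H_k$ ($k\ge 1$) be its normal components. Then $$cf(H)=\sum_{i=1}^{k} cf(H_i).$$
   Context: A hexagonal system (HS) is a finite 2-connected plane graph in which every interior face is a regular hexagon (a hexagon of the hexagonal lattice); its interior faces are called hexagons. For a graph $G$ with a perfect matching and a perfect matching $M$ of $G$, a forcing set of $M$ is a subset of $M$ contained in no other perfect matching of $G$. A complete forcing set of $G$ is a set $S\subseteq E(G)$ such that for every perfect matching $M$ of $G$, $S\cap M$ is a forcing set of $M$. The complete forcing number $cf(G)$ is the minimum cardinality of a complete forcing set of $G$. An edge of an HS $H$ with a perfect matching is a fixed double edge if it lies in every perfect matching of $H$, and a fixed single edge if it lies in no perfect matching of $H$; these are the fixed edges. $H$ is normal if it has no fixed edge. The non-fixed edges of $H$ span a subgraph each of whose components is a normal HS; these components are the normal components of $H$ (if $H$ is normal, its only normal component is $H$ itself). *)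

theory Defs
  imports Main
begin

text \<open>The lattice is
realised as the brick-wall graph: horizontal edges join (x,y) and (x+1,y);
vertical edges join (x,y) and (x,y+1) exactly when x+y is even. This plane graph
is isomorphic (as a plane graph) to the hexagonal lattice; its faces (cells) are
indexed by points (a,b) with a+b even and have six vertices
(a,b),(a+1,b),(a+2,b),(a,b+1),(a+1,b+1),(a+2,b+1).\<close>

type_synonym vert = "int \<times> int"
type_synonym edge = "vert set"

definition lattice_edge :: "edge \<Rightarrow> bool" where
  "lattice_edge e \<longleftrightarrow>
     (\<exists>x y. e = {(x,y),(x+1,y)}) \<or> (\<exists>x y. even (x+y) \<and> e = {(x,y),(x,y+1)})"

definition cell :: "vert \<Rightarrow> bool" where
  "cell h \<longleftrightarrow> even (fst h + snd h)"

definition hex_edges :: "vert \<Rightarrow> edge set" where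
  "hex_edges h = (case h of (a,b) \<Rightarrow>
     {{(a,b),(a+1,b)}, {(a+1,b),(a+2,b)}, {(a,b+1),(a+1,b+1)}, {(a+1,b+1),(a+2,b+1)},
      {(a,b),(a,b+1)}, {(a+2,b),(a+2,b+1)}})"

definition dual_adj :: "edge set \<Rightarrow> (vert \<times> vert) set" where
  "dual_adj E = {(h,h'). cell h \<and> cell h' \<and> h \<noteq> h' \<and>
                   (\<exists>e. e \<in> hex_edges h \<and> e \<in> hex_edges h' \<and> e \<notin> E)}"

text \<open>A cell lies in the unbounded face of the plane graph (V,E) iff it can be joined,
crossing only edges not in E, to a cell lying strictly to the right of all of V.\<close>
definition exterior_cell :: "vert set \<Rightarrow> edge set \<Rightarrow> vert \<Rightarrow> bool" where
  "exterior_cell V E h \<longleftrightarrow>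
     (\<exists>h'. (h,h') \<in> (dual_adj E)\<^sup>* \<and> (\<forall>v\<in>V. fst v < fst h'))"

definition adj_rel :: "edge set \<Rightarrow> (vert \<times> vert) set" where
  "adj_rel E = {(u,w). {u,w} \<in> E}"

definition connected_graph :: "vert set \<Rightarrow> edge set \<Rightarrow> bool" where
  "connected_graph V E \<longleftrightarrow> (\<forall>u\<in>V. \<forall>w\<in>V. (u,w) \<in> (adj_rel E)\<^sup>*)"

definition two_connected :: "vert set \<Rightarrow> edge set \<Rightarrow> bool" where
  "two_connected V E \<longleftrightarrow> card V \<ge> 3 \<and> connected_graph V E \<and>
     (\<forall>v\<in>V. connected_graph (V - {v}) {e\<in>E. v \<notin> e})"

text \<open>Hexagonal system: a finite 2-connected subgraph (V,E) of the hexagonal lattice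
(with its lattice embedding) every interior (bounded) face of which is a single
lattice hexagon, i.e. every cell not in the unbounded face has all six edges in E.\<close>
definition hexagonal_system :: "vert set \<Rightarrow> edge set \<Rightarrow> bool" where
  "hexagonal_system V E \<longleftrightarrow>
     finite V \<and> (\<forall>e\<in>E. lattice_edge e \<and> e \<subseteq> V) \<and> two_connected V E \<and>
     (\<forall>h. cell h \<and> \<not> exterior_cell V E h \<longrightarrow> hex_edges h \<subseteq> E)"

definition perfect_matching :: "vert set \<Rightarrow> edge set \<Rightarrow> edge set \<Rightarrow> bool" where
  "perfect_matching V E M \<longleftrightarrow> M \<subseteq> E \<and> (\<forall>v\<in>V. \<exists>!e. e \<in> M \<and> v \<in> e)"

definition forcing_set :: "vert set \<Rightarrow> edge set \<Rightarrow> edge set \<Rightarrow> edge set \<Rightarrow> bool" where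
  "forcing_set V E M S \<longleftrightarrow> S \<subseteq> M \<and>
     (\<forall>M'. perfect_matching V E M' \<and> S \<subseteq> M' \<longrightarrow> M' = M)"

definition complete_forcing_set :: "vert set \<Rightarrow> edge set \<Rightarrow> edge set \<Rightarrow> bool" where
  "complete_forcing_set V E S \<longleftrightarrow> S \<subseteq> E \<and>
     (\<forall>M. perfect_matching V E M \<longrightarrow> forcing_set V E M (S \<inter> M))"

definition cf :: "vert set \<Rightarrow> edge set \<Rightarrow> nat" where
  "cf V E = Min (card ` {S. complete_forcing_set V E S})"

definition fixed_double :: "vert set \<Rightarrow> edge set \<Rightarrow> edge \<Rightarrow> bool" where
  "fixed_double V E e \<longleftrightarrow> e \<in> E \<and> (\<forall>M. perfect_matching V E M \<longrightarrow> e \<in> M)"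

definition fixed_single :: "vert set \<Rightarrow> edge set \<Rightarrow> edge \<Rightarrow> bool" where
  "fixed_single V E e \<longleftrightarrow> e \<in> E \<and> (\<forall>M. perfect_matching V E M \<longrightarrow> e \<notin> M)"

definition nonfixed_edges :: "vert set \<Rightarrow> edge set \<Rightarrow> edge set" where
  "nonfixed_edges V E = {e\<in>E. \<not> fixed_double V E e \<and> \<not> fixed_single V E e}"

definition normal_components :: "vert set \<Rightarrow> edge set \<Rightarrow> (vert set \<times> edge set) set" where
  "normal_components V E =
     (let N = nonfixed_edges V E;
          comp = (\<lambda>v. {u. (v,u) \<in> (adj_rel N)\<^sup>*})
      in {(comp v, {e\<in>N. e \<subseteq> comp v}) | v. v \<in> \<Union>N})"

end

theory Submission
  imports Defs
begin

text \<open>Nothing about the hexagonal lattice is needed: the identity holds for every finite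
graph with a perfect matching. A fixed double edge lies in every perfect matching and a
fixed single edge in none, so a perfect matching is determined by its restrictions to the
normal components; conversely, inside one component the matching can be changed
arbitrarily while keeping the rest. Hence the restrictions of a complete forcing set to the
components are complete forcing sets of the components, and the union of complete forcing
sets of the components is one of the whole graph. As the components have pairwise disjoint
edge sets, the two resulting inequalities give equality.\<close>

lemma perfect_matching_subset: "perfect_matching V E M \<Longrightarrow> M \<subseteq> E"
  unfolding perfect_matching_def by blast

lemma perfect_matching_covers:
  "perfect_matching V E M \<Longrightarrow> v \<in> V \<Longrightarrow> \<exists>e\<in>M. v \<in> e"
  unfolding perfect_matching_def by blast

lemma perfect_matching_unique:
  "perfect_matching V E M \<Longrightarrow> v \<in> V \<Longrightarrow> e \<in> M \<Longrightarrow> v \<in> e \<Longrightarrow> f \<in> M \<Longrightarrow> v \<in> f \<Longrightarrow> e = f"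
  unfolding perfect_matching_def by blast

lemma perfect_matchingI:
  assumes "M \<subseteq> E" and "\<And>v. v \<in> V \<Longrightarrow> \<exists>e\<in>M. v \<in> e"
    and "\<And>v e f. v \<in> V \<Longrightarrow> e \<in> M \<Longrightarrow> v \<in> e \<Longrightarrow> f \<in> M \<Longrightarrow> v \<in> f \<Longrightarrow> e = f"
  shows "perfect_matching V E M"
  unfolding perfect_matching_def using assms by blast

lemma perfect_matching_subset_imp_eq:
  assumes "\<forall>e\<in>E. e \<noteq> {} \<and> e \<subseteq> V"
    and M: "perfect_matching V E M" and M': "perfect_matching V E M'" and "M \<subseteq> M'"
  shows "M = M'"
proof (rule ccontr)
  assume "M \<noteq> M'"
  then obtain e where e: "e \<in> M'" "e \<notin> M" using \<open>M \<subseteq> M'\<close> by blast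
  then obtain a where a: "a \<in> e" "a \<in> V" using assms(1) perfect_matching_subset[OF M'] by blast
  then obtain m where "m \<in> M" "a \<in> m" using perfect_matching_covers[OF M] by blast
  then show False
    using perfect_matching_unique[OF M' a(2) e(1) a(1)] \<open>M \<subseteq> M'\<close> e(2) by blast
qed

lemma complete_forcing_set_edges:
  assumes "\<forall>e\<in>E. e \<noteq> {} \<and> e \<subseteq> V"
  shows "complete_forcing_set V E E"
  unfolding complete_forcing_set_def forcing_set_def
  using perfect_matching_subset_imp_eq[OF assms] perfect_matching_subset by blast

lemma finite_complete_forcing_sets:
  "finite E \<Longrightarrow> finite {S. complete_forcing_set V E S}"
  by (rule finite_subset[of _ "Pow E"]) (auto simp: complete_forcing_set_def)

lemma cf_le_card: "finite E \<Longrightarrow> complete_forcing_set V E S \<Longrightarrow> cf V E \<le> card S"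
  unfolding cf_def using finite_complete_forcing_sets by (intro Min_le) auto

lemma cf_attained:
  assumes "finite E" and "\<forall>e\<in>E. e \<noteq> {} \<and> e \<subseteq> V"
  obtains S where "complete_forcing_set V E S" and "card S = cf V E"
proof -
  have "cf V E \<in> card ` {S. complete_forcing_set V E S}"
    unfolding cf_def using finite_complete_forcing_sets[OF assms(1)] complete_forcing_set_edges[OF assms(2)]
    by (intro Min_in) auto
  then show ?thesis using that by auto
qed

locale matchable_graph =
  fixes V :: "vert set" and E :: "edge set"
  assumes edge_doubleton: "e \<in> E \<Longrightarrow> \<exists>a b. e = {a, b}"
    and edge_subset: "e \<in> E \<Longrightarrow> e \<subseteq> V"
    and finite_edges: "finite E"
    and perfect_matching_exists: "\<exists>M. perfect_matching V E M"
begin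

abbreviation nonfixed :: "edge set" where
  "nonfixed \<equiv> nonfixed_edges V E"

definition comp_verts :: "vert \<Rightarrow> vert set" where
  "comp_verts v = {u. (v, u) \<in> (adj_rel nonfixed)\<^sup>*}"

definition comp_edges :: "vert \<Rightarrow> edge set" where
  "comp_edges v = {e \<in> nonfixed. e \<subseteq> comp_verts v}"

lemma normal_components_eq:
  "normal_components V E = (\<lambda>v. (comp_verts v, comp_edges v)) ` \<Union>nonfixed"
  unfolding normal_components_def comp_verts_def comp_edges_def Let_def by blast

lemma nonfixed_subset: "nonfixed \<subseteq> E"
  by (auto simp: nonfixed_edges_def)

lemma edges_nonempty_subset: "\<forall>e\<in>E. e \<noteq> {} \<and> e \<subseteq> V"
  using edge_doubleton edge_subset by blast

lemma comp_edges_subset: "comp_edges v \<subseteq> nonfixed"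
  by (auto simp: comp_edges_def)

lemma finite_comp_edges: "finite (comp_edges v)"
  using comp_edges_subset nonfixed_subset finite_edges by (blast intro: finite_subset)

lemma comp_edges_nonempty_subset: "\<forall>e\<in>comp_edges v. e \<noteq> {} \<and> e \<subseteq> comp_verts v"
  using comp_edges_subset nonfixed_subset edge_doubleton by (fastforce simp: comp_edges_def)

lemma mem_comp_verts_self: "v \<in> comp_verts v"
  by (simp add: comp_verts_def)

lemma comp_verts_subset:
  assumes "v \<in> \<Union>nonfixed" shows "comp_verts v \<subseteq> \<Union>nonfixed"
proof
  fix u assume "u \<in> comp_verts v"
  then have "(v, u) \<in> (adj_rel nonfixed)\<^sup>*" by (simp add: comp_verts_def)
  then show "u \<in> \<Union>nonfixed"
    by (induction rule: rtrancl_induct) (use assms in \<open>auto simp: adj_rel_def\<close>)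
qed

lemma comp_verts_subset_verts: "v \<in> \<Union>nonfixed \<Longrightarrow> comp_verts v \<subseteq> V"
  using comp_verts_subset nonfixed_subset edge_subset by blast

lemma comp_verts_eq:
  assumes "u \<in> comp_verts v" shows "comp_verts u = comp_verts v"
proof -
  have "sym ((adj_rel nonfixed)\<^sup>*)"
    by (intro sym_rtrancl) (auto simp: sym_def adj_rel_def insert_commute)
  then show ?thesis
    using assms unfolding comp_verts_def by (blast dest: symD intro: rtrancl_trans)
qed

lemma edge_in_comp_edges:
  assumes "e \<in> nonfixed" "u \<in> e" shows "e \<in> comp_edges u"
proof -
  obtain w where "e = {u, w}"
    using assms edge_doubleton nonfixed_subset by blast
  then have "e \<subseteq> comp_verts u"
    using assms(1) mem_comp_verts_self by (auto simp: comp_verts_def adj_rel_def)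
  then show ?thesis using assms(1) by (simp add: comp_edges_def)
qed

text \<open>A vertex covered by a non-fixed edge is covered by no fixed double edge: a perfect
matching containing the non-fixed edge would also contain the fixed one.\<close>

lemma matching_edge_in_comp_edges:
  assumes M: "perfect_matching V E M" and v: "v \<in> \<Union>nonfixed" and u: "u \<in> comp_verts v"
    and e: "e \<in> M" "u \<in> e"
  shows "e \<in> comp_edges v"
proof -
  have uV: "u \<in> V" using comp_verts_subset_verts v u by blast
  have eE: "e \<in> E" using perfect_matching_subset[OF M] e(1) by blast
  obtain f where f: "f \<in> nonfixed" "u \<in> f" using comp_verts_subset[OF v] u by blast
  then obtain M' where M': "perfect_matching V E M'" "f \<in> M'"
    using nonfixed_subset by (auto simp: nonfixed_edges_def fixed_single_def)
  have "\<not> fixed_double V E e"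
  proof
    assume "fixed_double V E e"
    then have "e \<in> M'" using M' by (simp add: fixed_double_def)
    then have "e = f" using perfect_matching_unique[OF M'(1) uV _ e(2) M'(2) f(2)] by blast
    then show False using \<open>fixed_double V E e\<close> f(1) by (simp add: nonfixed_edges_def)
  qed
  moreover have "\<not> fixed_single V E e" using M e(1) by (auto simp: fixed_single_def)
  ultimately have "e \<in> nonfixed" using eE by (simp add: nonfixed_edges_def)
  then have "e \<in> comp_edges u" using e(2) by (rule edge_in_comp_edges)
  then show ?thesis using comp_verts_eq[OF u] by (simp add: comp_edges_def)
qed

lemma perfect_matching_restrict:
  assumes M: "perfect_matching V E M" and v: "v \<in> \<Union>nonfixed"
  shows "perfect_matching (comp_verts v) (comp_edges v) (M \<inter> comp_edges v)"
proof (rule perfect_matchingI)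
  fix u assume u: "u \<in> comp_verts v"
  then obtain e where "e \<in> M" "u \<in> e"
    using perfect_matching_covers[OF M] comp_verts_subset_verts[OF v] by blast
  then show "\<exists>e\<in>M \<inter> comp_edges v. u \<in> e"
    using matching_edge_in_comp_edges[OF M v u] by blast
next
  fix u e f assume "u \<in> comp_verts v" "e \<in> M \<inter> comp_edges v" "u \<in> e" "f \<in> M \<inter> comp_edges v" "u \<in> f"
  then show "e = f"
    using perfect_matching_unique[OF M] comp_verts_subset_verts[OF v] by blast
qed auto

lemma perfect_matching_replace:
  assumes M: "perfect_matching V E M" and v: "v \<in> \<Union>nonfixed"
    and X: "perfect_matching (comp_verts v) (comp_edges v) X"
  shows "perfect_matching V E ((M - comp_edges v) \<union> X)"
proof (rule perfect_matchingI)
  have X_sub: "X \<subseteq> comp_edges v" using perfect_matching_subset[OF X] .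
  then show "(M - comp_edges v) \<union> X \<subseteq> E"
    using perfect_matching_subset[OF M] comp_edges_subset nonfixed_subset by blast
  have X_verts: "x \<subseteq> comp_verts v" if "x \<in> X" for x
    using that X_sub by (auto simp: comp_edges_def)
  fix u assume uV: "u \<in> V"
  show "\<exists>e\<in>(M - comp_edges v) \<union> X. u \<in> e"
  proof (cases "u \<in> comp_verts v")
    case True
    then show ?thesis using perfect_matching_covers[OF X] by blast
  next
    case False
    then show ?thesis
      using perfect_matching_covers[OF M uV] by (auto simp: comp_edges_def)
  qed
  fix e f assume ef: "e \<in> (M - comp_edges v) \<union> X" "u \<in> e" "f \<in> (M - comp_edges v) \<union> X" "u \<in> f"
  show "e = f"
  proof (cases "u \<in> comp_verts v")
    case True
    then have "e \<in> X" "f \<in> X" using ef matching_edge_in_comp_edges[OF M v True] by blast+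
    then show ?thesis using perfect_matching_unique[OF X True] ef(2,4) by blast
  next
    case False
    then have "e \<in> M" "f \<in> M" using ef X_verts by blast+
    then show ?thesis using perfect_matching_unique[OF M uV] ef(2,4) by blast
  qed
qed

lemma complete_forcing_set_restrict:
  assumes S: "complete_forcing_set V E S" and v: "v \<in> \<Union>nonfixed"
  shows "complete_forcing_set (comp_verts v) (comp_edges v) (S \<inter> comp_edges v)"
  unfolding complete_forcing_set_def forcing_set_def
proof (intro conjI allI impI)
  fix X Y
  assume X: "perfect_matching (comp_verts v) (comp_edges v) X"
    and "perfect_matching (comp_verts v) (comp_edges v) Y \<and> S \<inter> comp_edges v \<inter> X \<subseteq> Y"
  then have Y: "perfect_matching (comp_verts v) (comp_edges v) Y"
    and SXY: "S \<inter> comp_edges v \<inter> X \<subseteq> Y" by simp_all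
  obtain M0 where M0: "perfect_matching V E M0" using perfect_matching_exists by blast
  let ?MX = "(M0 - comp_edges v) \<union> X" and ?MY = "(M0 - comp_edges v) \<union> Y"
  have sub: "X \<subseteq> comp_edges v" "Y \<subseteq> comp_edges v"
    using perfect_matching_subset X Y by blast+
  have "S \<inter> ?MX \<subseteq> ?MY" using SXY sub by blast
  then have "?MY = ?MX"
    using S perfect_matching_replace[OF M0 v X] perfect_matching_replace[OF M0 v Y]
    by (simp add: complete_forcing_set_def forcing_set_def)
  then have "?MY \<inter> comp_edges v = ?MX \<inter> comp_edges v" by simp
  then show "Y = X" using sub by blast
qed auto

text \<open>Perfect matchings agreeing on every normal component are equal: off the components
only fixed edges remain, and those are decided the same way in every perfect matching.\<close>

lemma perfect_matching_eqI:
  assumes M: "perfect_matching V E M" and M': "perfect_matching V E M'"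
    and agree: "\<And>v. v \<in> \<Union>nonfixed \<Longrightarrow> M \<inter> comp_edges v = M' \<inter> comp_edges v"
  shows "M = M'"
proof -
  have "A \<subseteq> B" if A: "perfect_matching V E A" and B: "perfect_matching V E B"
    and agreeAB: "\<And>v. v \<in> \<Union>nonfixed \<Longrightarrow> A \<inter> comp_edges v = B \<inter> comp_edges v" for A B
  proof
    fix e assume e: "e \<in> A"
    show "e \<in> B"
    proof (cases "e \<in> nonfixed")
      case True
      then obtain u where "u \<in> e" using edge_doubleton nonfixed_subset by blast
      then show ?thesis
        using edge_in_comp_edges[OF True] agreeAB[of u] True e by blast
    next
      case False
      then have "fixed_double V E e"
        using A e perfect_matching_subset[OF A] by (auto simp: nonfixed_edges_def fixed_single_def)
      then show ?thesis using B by (simp add: fixed_double_def)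
    qed
  qed
  then show ?thesis using M M' agree by (metis subset_antisym)
qed

lemma complete_forcing_set_UN:
  assumes F: "\<And>v. v \<in> \<Union>nonfixed \<Longrightarrow> complete_forcing_set (comp_verts v) (comp_edges v) (F v)"
  shows "complete_forcing_set V E (\<Union>v\<in>\<Union>nonfixed. F v)"
  unfolding complete_forcing_set_def forcing_set_def
proof (intro conjI allI impI)
  show "(\<Union>v\<in>\<Union>nonfixed. F v) \<subseteq> E"
    using F comp_edges_subset nonfixed_subset by (fastforce simp: complete_forcing_set_def)
  fix M M' assume M: "perfect_matching V E M"
    and "perfect_matching V E M' \<and> (\<Union>v\<in>\<Union>nonfixed. F v) \<inter> M \<subseteq> M'"
  then have M': "perfect_matching V E M'" and FM: "(\<Union>v\<in>\<Union>nonfixed. F v) \<inter> M \<subseteq> M'"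
    by simp_all
  show "M' = M"
  proof (rule perfect_matching_eqI[OF M' M])
    fix v assume v: "v \<in> \<Union>nonfixed"
    have "F v \<subseteq> comp_edges v" using F[OF v] by (simp add: complete_forcing_set_def)
    then have "F v \<inter> (M \<inter> comp_edges v) \<subseteq> M' \<inter> comp_edges v" using FM v by blast
    then show "M' \<inter> comp_edges v = M \<inter> comp_edges v"
      using F[OF v] perfect_matching_restrict[OF M v] perfect_matching_restrict[OF M' v]
      by (simp add: complete_forcing_set_def forcing_set_def)
  qed
qed auto

lemma finite_normal_components: "finite (normal_components V E)"
proof -
  have "finite nonfixed" using nonfixed_subset finite_edges by (rule finite_subset)
  moreover have "finite e" if "e \<in> nonfixed" for e
    using that edge_doubleton nonfixed_subset by blast
  ultimately show ?thesis unfolding normal_components_eq by blast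
qed

lemma normal_components_disjoint:
  assumes "C \<in> normal_components V E" "C' \<in> normal_components V E" "C \<noteq> C'"
  shows "snd C \<inter> snd C' = {}"
proof (rule ccontr)
  assume "snd C \<inter> snd C' \<noteq> {}"
  then obtain e where e: "e \<in> snd C" "e \<in> snd C'" by blast
  obtain v v' where C: "C = (comp_verts v, comp_edges v)" and C': "C' = (comp_verts v', comp_edges v')"
    using assms(1,2) unfolding normal_components_eq by blast
  have "e \<noteq> {}" using e(1) C comp_edges_nonempty_subset by auto
  then obtain a where "a \<in> e" by blast
  then have "a \<in> comp_verts v" "a \<in> comp_verts v'" using e C C' by (auto simp: comp_edges_def)
  then have "comp_verts v = comp_verts v'" using comp_verts_eq by metis
  then show False using assms(3) C C' by (simp add: comp_edges_def)
qed

lemma cf_le_sum_normal_components: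
  "cf V E \<le> (\<Sum>C\<in>normal_components V E. cf (fst C) (snd C))"
proof -
  let ?NC = "normal_components V E"
  have "\<forall>C\<in>?NC. \<exists>S. complete_forcing_set (fst C) (snd C) S \<and> card S = cf (fst C) (snd C)"
  proof
    fix C assume "C \<in> ?NC"
    then obtain v where C: "C = (comp_verts v, comp_edges v)"
      unfolding normal_components_eq by blast
    obtain S where "complete_forcing_set (comp_verts v) (comp_edges v) S"
        "card S = cf (comp_verts v) (comp_edges v)"
      using cf_attained[OF finite_comp_edges comp_edges_nonempty_subset] .
    then show "\<exists>S. complete_forcing_set (fst C) (snd C) S \<and> card S = cf (fst C) (snd C)"
      using C by auto
  qed
  then obtain G where G: "\<forall>C\<in>?NC.
      complete_forcing_set (fst C) (snd C) (G C) \<and> card (G C) = cf (fst C) (snd C)"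
    by (rule bchoice[elim_format]) blast
  have "complete_forcing_set V E (\<Union>v\<in>\<Union>nonfixed. G (comp_verts v, comp_edges v))"
    using G by (intro complete_forcing_set_UN) (auto simp: normal_components_eq)
  moreover have "(\<Union>v\<in>\<Union>nonfixed. G (comp_verts v, comp_edges v)) = (\<Union>C\<in>?NC. G C)"
    by (simp add: normal_components_eq image_image)
  ultimately have "cf V E \<le> card (\<Union>C\<in>?NC. G C)"
    using cf_le_card[OF finite_edges] by simp
  also have "\<dots> \<le> (\<Sum>C\<in>?NC. card (G C))"
    by (rule card_UN_le[OF finite_normal_components])
  also have "\<dots> = (\<Sum>C\<in>?NC. cf (fst C) (snd C))"
    using G by (intro sum.cong) simp_all
  finally show ?thesis .
qed

lemma sum_normal_components_le_cf:
  "(\<Sum>C\<in>normal_components V E. cf (fst C) (snd C)) \<le> cf V E"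
proof -
  let ?NC = "normal_components V E"
  obtain S where S: "complete_forcing_set V E S" "card S = cf V E"
    using cf_attained[OF finite_edges edges_nonempty_subset] by blast
  have finS: "finite S"
    using S(1) finite_edges by (auto simp: complete_forcing_set_def intro: finite_subset)
  have "(\<Sum>C\<in>?NC. cf (fst C) (snd C)) \<le> (\<Sum>C\<in>?NC. card (S \<inter> snd C))"
  proof (rule sum_mono)
    fix C assume "C \<in> ?NC"
    then obtain v where "v \<in> \<Union>nonfixed" "C = (comp_verts v, comp_edges v)"
      unfolding normal_components_eq by blast
    then show "cf (fst C) (snd C) \<le> card (S \<inter> snd C)"
      using cf_le_card[OF finite_comp_edges complete_forcing_set_restrict[OF S(1)]] by simp
  qed
  also have "\<dots> = card (\<Union>C\<in>?NC. S \<inter> snd C)"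
    using finS normal_components_disjoint
    by (intro card_UN_disjoint[symmetric] finite_normal_components) blast+
  also have "\<dots> \<le> card S"
    using finS by (intro card_mono) blast+
  finally show ?thesis using S(2) by simp
qed

theorem cf_eq_sum_normal_components:
  "cf V E = (\<Sum>C\<in>normal_components V E. cf (fst C) (snd C))"
  using cf_le_sum_normal_components sum_normal_components_le_cf by (rule antisym)

end

lemma lattice_edge_doubleton: "lattice_edge e \<Longrightarrow> \<exists>a b. e = {a, b}"
  unfolding lattice_edge_def by blast

lemma hexagonal_system_matchable:
  assumes "hexagonal_system V E" and "\<exists>M. perfect_matching V E M"
  shows "matchable_graph V E"
proof
  have "finite V" and edges: "\<forall>e\<in>E. lattice_edge e \<and> e \<subseteq> V"
    using assms(1) by (simp_all add: hexagonal_system_def)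
  then show "finite E" by (blast intro: finite_subset[of E "Pow V"])
  show "e \<in> E \<Longrightarrow> \<exists>a b. e = {a, b}" for e using edges lattice_edge_doubleton by blast
  show "e \<in> E \<Longrightarrow> e \<subseteq> V" for e using edges by blast
qed (rule assms(2))

theorem mainTheorem1:
  assumes "hexagonal_system V E"
    and "\<exists>M. perfect_matching V E M"
  shows "cf V E = (\<Sum>C\<in>normal_components V E. cf (fst C) (snd C))"
  using hexagonal_system_matchable[OF assms] by (rule matchable_graph.cf_eq_sum_normal_components)

end
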